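(* Let $\mathcal F\subseteq\mathcal G$ be lattice filters of an MV-algebra $\mathcal L$, and let $Q$ be an implication filter with $Q\subseteq\mathcal K(\mathcal G)$. Then $$(\mathcal F\sqsubseteq\!\!\to\mathcal G)/Q=(\mathcal F/Q)\sqsubseteq\!\!\to(\mathcal G/Q),$$ where the right-hand side is computed in the MV-algebra $\mathcal L/Q$.
   Context: $\mathcal L=(L,\oplus,\lnot,0)$ is an MV-algebra. We write $1=\lnot0$, $x\otimes y=\lnot(\lnot x\oplus\lnot y)$, and $x\to y=\lnot x\oplus y$, and use the usual lattice order. A lattice filter is a nonempty upward-closed subset closed under $\wedge$. An implication filter is a set $Q\ni1$ closed under modus ponens. $\mathcal L/Q$ is the quotient by $x\sim_Q y\iff x\to y,\ y\to x\in Q$, and $X/Q=\{[x]_Q : x\in X\}$. For an upward-closed $\mathcal F$ (in any MV-algebra) and $a$, let $\mathcal F_a=\{z: z\to a\notin\mathcal F\}$, and let $\mathcal K(\mathcal F)=\{z:\forall a\notin\mathcal F,\ z\to a\notin\mathcal F\}$. For $\mathcal F\subseteq\mathcal G$ we put $\mathcal F\sqsubseteq\!\!\to\mathcal G=\bigcap_{a\notin\mathcal G}\mathcal F_a$. *)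

theory Defs
  imports Main
begin

text \<open>MV-algebras, presented as structures on an explicit carrier set, so that
quotient algebras (whose elements are equivalence classes) can be formed.\<close>

record 'a mv =
  mv_carrier :: "'a set"
  mv_oplus :: "'a \<Rightarrow> 'a \<Rightarrow> 'a"
  mv_neg :: "'a \<Rightarrow> 'a"
  mv_zero :: "'a"

definition mv_one :: "('a, 'b) mv_scheme \<Rightarrow> 'a" where
  "mv_one L = mv_neg L (mv_zero L)"

definition mv_otimes :: "('a, 'b) mv_scheme \<Rightarrow> 'a \<Rightarrow> 'a \<Rightarrow> 'a" where
  "mv_otimes L x y = mv_neg L (mv_oplus L (mv_neg L x) (mv_neg L y))"

definition mv_imp :: "('a, 'b) mv_scheme \<Rightarrow> 'a \<Rightarrow> 'a \<Rightarrow> 'a" where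
  "mv_imp L x y = mv_oplus L (mv_neg L x) y"

definition mv_le :: "('a, 'b) mv_scheme \<Rightarrow> 'a \<Rightarrow> 'a \<Rightarrow> bool" where
  "mv_le L x y \<longleftrightarrow> mv_imp L x y = mv_one L"

definition mv_meet :: "('a, 'b) mv_scheme \<Rightarrow> 'a \<Rightarrow> 'a \<Rightarrow> 'a" where
  "mv_meet L x y = mv_otimes L x (mv_imp L x y)"

definition mv_algebra :: "('a, 'b) mv_scheme \<Rightarrow> bool" where
  "mv_algebra L \<longleftrightarrow>
     mv_zero L \<in> mv_carrier L \<and>
     (\<forall>x\<in>mv_carrier L. \<forall>y\<in>mv_carrier L. mv_oplus L x y \<in> mv_carrier L) \<and>
     (\<forall>x\<in>mv_carrier L. mv_neg L x \<in> mv_carrier L) \<and>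
     (\<forall>x\<in>mv_carrier L. \<forall>y\<in>mv_carrier L. \<forall>z\<in>mv_carrier L.
        mv_oplus L x (mv_oplus L y z) = mv_oplus L (mv_oplus L x y) z) \<and>
     (\<forall>x\<in>mv_carrier L. \<forall>y\<in>mv_carrier L. mv_oplus L x y = mv_oplus L y x) \<and>
     (\<forall>x\<in>mv_carrier L. mv_oplus L x (mv_zero L) = x) \<and>
     (\<forall>x\<in>mv_carrier L. mv_neg L (mv_neg L x) = x) \<and>
     (\<forall>x\<in>mv_carrier L. mv_oplus L x (mv_one L) = mv_one L) \<and>
     (\<forall>x\<in>mv_carrier L. \<forall>y\<in>mv_carrier L.
        mv_oplus L (mv_neg L (mv_oplus L (mv_neg L x) y)) y =
        mv_oplus L (mv_neg L (mv_oplus L (mv_neg L y) x)) x)"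

definition lattice_filter :: "('a, 'b) mv_scheme \<Rightarrow> 'a set \<Rightarrow> bool" where
  "lattice_filter L F \<longleftrightarrow> F \<subseteq> mv_carrier L \<and> F \<noteq> {} \<and>
     (\<forall>x\<in>F. \<forall>y\<in>mv_carrier L. mv_le L x y \<longrightarrow> y \<in> F) \<and>
     (\<forall>x\<in>F. \<forall>y\<in>F. mv_meet L x y \<in> F)"

definition implication_filter :: "('a, 'b) mv_scheme \<Rightarrow> 'a set \<Rightarrow> bool" where
  "implication_filter L Q \<longleftrightarrow> Q \<subseteq> mv_carrier L \<and> mv_one L \<in> Q \<and>
     (\<forall>x\<in>mv_carrier L. \<forall>y\<in>mv_carrier L. x \<in> Q \<longrightarrow> mv_imp L x y \<in> Q \<longrightarrow> y \<in> Q)"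

definition mv_class :: "('a, 'b) mv_scheme \<Rightarrow> 'a set \<Rightarrow> 'a \<Rightarrow> 'a set" where
  "mv_class L Q x = {y \<in> mv_carrier L. mv_imp L x y \<in> Q \<and> mv_imp L y x \<in> Q}"

definition mv_quot_set :: "('a, 'b) mv_scheme \<Rightarrow> 'a set \<Rightarrow> 'a set \<Rightarrow> 'a set set" where
  "mv_quot_set L Q X = mv_class L Q ` X"

definition mv_quot :: "('a, 'b) mv_scheme \<Rightarrow> 'a set \<Rightarrow> 'a set mv" where
  "mv_quot L Q =
     \<lparr> mv_carrier = mv_quot_set L Q (mv_carrier L),
       mv_oplus = (\<lambda>X Y. mv_class L Q (mv_oplus L (SOME x. x \<in> X) (SOME y. y \<in> Y))),
       mv_neg = (\<lambda>X. mv_class L Q (mv_neg L (SOME x. x \<in> X))),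
       mv_zero = mv_class L Q (mv_zero L) \<rparr>"

definition F_sub :: "('a, 'b) mv_scheme \<Rightarrow> 'a set \<Rightarrow> 'a \<Rightarrow> 'a set" where
  "F_sub L F a = {z \<in> mv_carrier L. mv_imp L z a \<notin> F}"

definition K_set :: "('a, 'b) mv_scheme \<Rightarrow> 'a set \<Rightarrow> 'a set" where
  "K_set L F = {z \<in> mv_carrier L. \<forall>a\<in>mv_carrier L. a \<notin> F \<longrightarrow> mv_imp L z a \<notin> F}"

text \<open>Intersection over a ranging over carrier minus G (relative to the carrier,
  so that the empty intersection is the whole carrier).\<close>
definition rel_imp :: "('a, 'b) mv_scheme \<Rightarrow> 'a set \<Rightarrow> 'a set \<Rightarrow> 'a set" where
  "rel_imp L F G = mv_carrier L \<inter> (\<Inter>a\<in>mv_carrier L - G. F_sub L F a)"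

end

theory Submission
  imports Defs
begin

(* Write [x] for the Q-class of x.  Two facts about the quotient L/Q drive the proof:
   (1) the quotient implication is computed on representatives: [z] -> [a] = [z -> a];
   (2) since Q \<subseteq> K(G) and G is upward closed, G is a union of Q-classes:
       [a] \<in> G/Q iff a \<in> G.
   Moreover, for an upward-closed F the sets F_a with a \<notin> G "see through" Q:
       z -> a \<notin> F for all a \<notin> G  iff  [z -> a] \<notin> F/Q for all a \<notin> G,
   because f ~ z -> a with f \<in> F gives, for q = f -> (z -> a) \<in> Q, the element
   z -> (q -> a) = q -> (z -> a) \<ge> f in F, while q -> a \<notin> G by the definition of K(G).
   Combining the three facts, [z] \<in> (F/Q) [=-> (G/Q) iff z \<in> F [=-> G, which gives the theorem.
   The file first develops the needed MV-algebra identities (locale mv_alg), then the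
   congruence properties of an implication filter and the quotient (locale mv_quotient),
   then the two saturation lemmas, and finally the theorem. *)

section \<open>Basic arithmetic of MV-algebras\<close>

locale mv_alg =
  fixes L :: "('a, 'b) mv_scheme"
  assumes mv_algebra: "mv_algebra L"
begin

abbreviation carrier :: "'a set" where "carrier \<equiv> mv_carrier L"
abbreviation oplus :: "'a \<Rightarrow> 'a \<Rightarrow> 'a" (infixr "\<oplus>" 65) where "x \<oplus> y \<equiv> mv_oplus L x y"
abbreviation neg :: "'a \<Rightarrow> 'a" where "neg \<equiv> mv_neg L"
abbreviation one :: "'a" where "one \<equiv> mv_one L"
abbreviation imp :: "'a \<Rightarrow> 'a \<Rightarrow> 'a" (infixr "\<leadsto>" 55) where "x \<leadsto> y \<equiv> mv_imp L x y"

lemma closed [simp]: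
  "x \<in> carrier \<Longrightarrow> y \<in> carrier \<Longrightarrow> x \<oplus> y \<in> carrier"
  "x \<in> carrier \<Longrightarrow> neg x \<in> carrier"
  "mv_zero L \<in> carrier"
  using mv_algebra unfolding mv_algebra_def by auto

lemma one_closed [simp]: "one \<in> carrier"
  unfolding mv_one_def by simp

lemma imp_closed [simp]: "x \<in> carrier \<Longrightarrow> y \<in> carrier \<Longrightarrow> x \<leadsto> y \<in> carrier"
  unfolding mv_imp_def by simp

lemma oplus_assoc: "x \<in> carrier \<Longrightarrow> y \<in> carrier \<Longrightarrow> z \<in> carrier \<Longrightarrow> (x \<oplus> y) \<oplus> z = x \<oplus> y \<oplus> z"
  using mv_algebra unfolding mv_algebra_def by metis

lemma oplus_comm: "x \<in> carrier \<Longrightarrow> y \<in> carrier \<Longrightarrow> x \<oplus> y = y \<oplus> x"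
  using mv_algebra unfolding mv_algebra_def by metis

lemma oplus_left_commute:
  "x \<in> carrier \<Longrightarrow> y \<in> carrier \<Longrightarrow> z \<in> carrier \<Longrightarrow> x \<oplus> y \<oplus> z = y \<oplus> x \<oplus> z"
  by (metis oplus_assoc oplus_comm)

lemma oplus_zero [simp]: "x \<in> carrier \<Longrightarrow> x \<oplus> mv_zero L = x"
  using mv_algebra unfolding mv_algebra_def by metis

lemma neg_neg [simp]: "x \<in> carrier \<Longrightarrow> neg (neg x) = x"
  using mv_algebra unfolding mv_algebra_def by metis

lemma oplus_one [simp]: "x \<in> carrier \<Longrightarrow> x \<oplus> one = one"
  using mv_algebra unfolding mv_algebra_def by metis

lemma join_symmetric: "x \<in> carrier \<Longrightarrow> y \<in> carrier \<Longrightarrow> neg (neg x \<oplus> y) \<oplus> y = neg (neg y \<oplus> x) \<oplus> x"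
  using mv_algebra unfolding mv_algebra_def by metis

lemma neg_oplus_self [simp]: "x \<in> carrier \<Longrightarrow> neg x \<oplus> x = one"
proof -
  assume x: "x \<in> carrier"
  have "neg one = mv_zero L" unfolding mv_one_def by simp
  then show ?thesis
    using join_symmetric[OF x one_closed] x by (simp add: oplus_comm[of "mv_zero L"])
qed

lemma imp_self: "x \<in> carrier \<Longrightarrow> x \<leadsto> x = one"
  unfolding mv_imp_def by simp

lemma le_via_imp: "x \<leadsto> y = one \<Longrightarrow> mv_le L x y"
  unfolding mv_le_def .

lemma le_double_imp: "f \<in> carrier \<Longrightarrow> w \<in> carrier \<Longrightarrow> mv_le L f ((f \<leadsto> w) \<leadsto> w)"
proof (rule le_via_imp)
  assume f: "f \<in> carrier" and w: "w \<in> carrier"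
  have "f \<leadsto> ((f \<leadsto> w) \<leadsto> w) = neg f \<oplus> neg (neg w \<oplus> f) \<oplus> f"
    unfolding mv_imp_def using join_symmetric[OF f w] f w by simp
  also have "\<dots> = neg (neg w \<oplus> f) \<oplus> neg f \<oplus> f"
    using f w oplus_left_commute[of "neg f" "neg (neg w \<oplus> f)" f] by simp
  finally show "f \<leadsto> ((f \<leadsto> w) \<leadsto> w) = one" using f w by simp
qed

lemma imp_exchange:
  "x \<in> carrier \<Longrightarrow> y \<in> carrier \<Longrightarrow> z \<in> carrier \<Longrightarrow> x \<leadsto> (y \<leadsto> z) = y \<leadsto> (x \<leadsto> z)"
  unfolding mv_imp_def by (simp add: oplus_left_commute)

lemma imp_transitive:
  assumes x: "x \<in> carrier" and y: "y \<in> carrier" and w: "w \<in> carrier"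
  shows "(x \<leadsto> y) \<leadsto> ((y \<leadsto> w) \<leadsto> (x \<leadsto> w)) = one"
proof -
  have "(x \<leadsto> y) \<leadsto> ((y \<leadsto> w) \<leadsto> (x \<leadsto> w)) = neg (neg x \<oplus> y) \<oplus> neg x \<oplus> neg (neg y \<oplus> w) \<oplus> w"
    unfolding mv_imp_def using x y w by (simp add: oplus_left_commute[of "neg (neg y \<oplus> w)" "neg x"])
  also have "\<dots> = neg (neg x \<oplus> y) \<oplus> neg x \<oplus> neg (neg w \<oplus> y) \<oplus> y"
    using join_symmetric[OF y w] by simp
  also have "\<dots> = neg (neg w \<oplus> y) \<oplus> neg (neg x \<oplus> y) \<oplus> neg x \<oplus> y"
    using x y w by (simp add: oplus_left_commute oplus_assoc)
  finally show ?thesis using x y w by simp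
qed

lemma imp_oplus_mono:
  assumes x: "x \<in> carrier" and x': "x' \<in> carrier" and y: "y \<in> carrier"
  shows "(x \<leadsto> x') \<leadsto> ((x \<oplus> y) \<leadsto> (x' \<oplus> y)) = one"
proof -
  have "(x \<leadsto> x') \<leadsto> ((x \<oplus> y) \<leadsto> (x' \<oplus> y)) = neg (x \<oplus> y) \<oplus> y \<oplus> neg (neg x \<oplus> x') \<oplus> x'"
    unfolding mv_imp_def using x x' y
      oplus_left_commute[of "neg (neg x \<oplus> x')" "neg (x \<oplus> y)" "x' \<oplus> y"] oplus_comm[of x' y]
      oplus_left_commute[of "neg (neg x \<oplus> x')" y x'] by simp
  also have "\<dots> = neg (x \<oplus> y) \<oplus> y \<oplus> neg (neg x' \<oplus> x) \<oplus> x"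
    using join_symmetric[OF x x'] by simp
  also have "\<dots> = neg (neg x' \<oplus> x) \<oplus> neg (x \<oplus> y) \<oplus> x \<oplus> y"
    using x x' y oplus_left_commute[of y "neg (neg x' \<oplus> x)" x] oplus_comm[of y x]
      oplus_left_commute[of "neg (x \<oplus> y)" "neg (neg x' \<oplus> x)" "x \<oplus> y"] by simp
  finally show ?thesis using x x' y by simp
qed

lemma imp_contrapos: "x \<in> carrier \<Longrightarrow> y \<in> carrier \<Longrightarrow> neg y \<leadsto> neg x = x \<leadsto> y"
  unfolding mv_imp_def by (simp add: oplus_comm[of y "neg x"])

end

text \<open>The only property of the filters F and G the theorem really depends on.\<close>
definition upward_closed :: "('a, 'b) mv_scheme \<Rightarrow> 'a set \<Rightarrow> bool" where
  "upward_closed L F \<longleftrightarrow> F \<subseteq> mv_carrier L \<and> (\<forall>x\<in>F. \<forall>y\<in>mv_carrier L. mv_le L x y \<longrightarrow> y \<in> F)"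

lemma lattice_filter_upward_closed: "lattice_filter L F \<Longrightarrow> upward_closed L F"
  unfolding lattice_filter_def upward_closed_def by blast

lemma upward_closedD:
  "upward_closed L F \<Longrightarrow> x \<in> F \<Longrightarrow> y \<in> mv_carrier L \<Longrightarrow> mv_le L x y \<Longrightarrow> y \<in> F"
  unfolding upward_closed_def by blast

section \<open>Implication filters and the quotient algebra\<close>

locale mv_quotient = mv_alg +
  fixes Q :: "'a set"
  assumes implication_filter: "implication_filter L Q"
begin

lemma Q_subset: "Q \<subseteq> carrier"
  using implication_filter unfolding implication_filter_def by blast

lemma one_in_Q: "one \<in> Q"
  using implication_filter unfolding implication_filter_def by blast

lemma Q_modus_ponens: "x \<in> carrier \<Longrightarrow> y \<in> carrier \<Longrightarrow> x \<in> Q \<Longrightarrow> x \<leadsto> y \<in> Q \<Longrightarrow> y \<in> Q"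
  using implication_filter unfolding implication_filter_def by blast

lemma Q_upward: "q \<in> Q \<Longrightarrow> r \<in> carrier \<Longrightarrow> q \<leadsto> r = one \<Longrightarrow> r \<in> Q"
  using Q_modus_ponens[of q r] Q_subset one_in_Q by auto

lemma Q_imp_trans:
  assumes "x \<in> carrier" "y \<in> carrier" "w \<in> carrier" "x \<leadsto> y \<in> Q" "y \<leadsto> w \<in> Q"
  shows "x \<leadsto> w \<in> Q"
proof -
  have "(y \<leadsto> w) \<leadsto> (x \<leadsto> w) \<in> Q"
    using Q_upward[OF assms(4) _ imp_transitive[OF assms(1-3)]] assms(1-3) by simp
  then show ?thesis using Q_modus_ponens[of "y \<leadsto> w" "x \<leadsto> w"] assms by simp
qed

abbreviation cls :: "'a \<Rightarrow> 'a set" where "cls \<equiv> mv_class L Q"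

lemma cls_subset: "cls x \<subseteq> carrier"
  unfolding mv_class_def by auto

lemma cls_self: "x \<in> carrier \<Longrightarrow> x \<in> cls x"
  unfolding mv_class_def using imp_self one_in_Q by auto

lemma cls_eqI:
  assumes x: "x \<in> carrier" and y: "y \<in> carrier" and "x \<leadsto> y \<in> Q" "y \<leadsto> x \<in> Q"
  shows "cls x = cls y"
proof -
  have "z \<in> cls x \<longleftrightarrow> z \<in> cls y" if z: "z \<in> carrier" for z
    using Q_imp_trans[OF x y z] Q_imp_trans[OF y x z] Q_imp_trans[OF z x y] Q_imp_trans[OF z y x]
      assms z unfolding mv_class_def by auto
  then show ?thesis using cls_subset by blast
qed

lemma cls_neg: "x \<in> carrier \<Longrightarrow> y \<in> cls x \<Longrightarrow> cls (neg y) = cls (neg x)"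
  by (rule cls_eqI) (auto simp: mv_class_def imp_contrapos)

lemma cls_oplus_left:
  assumes "x \<in> carrier" "x' \<in> cls x" "y \<in> carrier"
  shows "cls (x' \<oplus> y) = cls (x \<oplus> y)"
proof -
  have x': "x' \<in> carrier" and "x \<leadsto> x' \<in> Q" "x' \<leadsto> x \<in> Q"
    using assms(2) unfolding mv_class_def by auto
  then have "(x \<oplus> y) \<leadsto> (x' \<oplus> y) \<in> Q" "(x' \<oplus> y) \<leadsto> (x \<oplus> y) \<in> Q"
    using Q_upward[OF _ _ imp_oplus_mono[OF assms(1) x' assms(3)]]
      Q_upward[OF _ _ imp_oplus_mono[OF x' assms(1) assms(3)]] assms(1,3) x' by simp_all
  then show ?thesis using cls_eqI assms(1,3) x' by simp
qed

lemma cls_oplus: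
  assumes x: "x \<in> carrier" and y: "y \<in> carrier" and "x' \<in> cls x" "y' \<in> cls y"
  shows "cls (x' \<oplus> y') = cls (x \<oplus> y)"
proof -
  have x': "x' \<in> carrier" and y': "y' \<in> carrier" using assms cls_subset by auto
  have "cls (x' \<oplus> y') = cls (x \<oplus> y')" using cls_oplus_left[OF x _ y'] assms(3) .
  also have "\<dots> = cls (y' \<oplus> x)" using oplus_comm[OF x y'] by (rule arg_cong)
  also have "\<dots> = cls (y \<oplus> x)" using cls_oplus_left[OF y _ x] assms(4) .
  also have "\<dots> = cls (x \<oplus> y)" using oplus_comm[OF y x] by (rule arg_cong)
  finally show ?thesis .
qed

lemma some_in_cls: "x \<in> carrier \<Longrightarrow> (SOME z. z \<in> cls x) \<in> cls x"
  using cls_self by (meson someI)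

lemma quot_carrier: "mv_carrier (mv_quot L Q) = cls ` carrier"
  unfolding mv_quot_def mv_quot_set_def by simp

text \<open>Fact (1): the implication of L/Q, defined via chosen representatives, can be computed
  on any representatives, because Q-equivalence is a congruence for negation and addition.\<close>
lemma quot_imp: "z \<in> carrier \<Longrightarrow> a \<in> carrier \<Longrightarrow> mv_imp (mv_quot L Q) (cls z) (cls a) = cls (z \<leadsto> a)"
proof -
  assume z: "z \<in> carrier" and a: "a \<in> carrier"
  define z0 where "z0 = (SOME x. x \<in> cls z)"
  define u0 where "u0 = (SOME x. x \<in> cls (neg z0))"
  define a0 where "a0 = (SOME x. x \<in> cls a)"
  have z0: "z0 \<in> cls z" using some_in_cls z z0_def by simp
  then have "neg z0 \<in> carrier" using cls_subset closed(2) by blast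
  then have "u0 \<in> cls (neg z0)" using some_in_cls u0_def by simp
  then have u0: "u0 \<in> cls (neg z)" using cls_neg[OF z z0] by simp
  have a0: "a0 \<in> cls a" using some_in_cls a a0_def by simp
  have "mv_imp (mv_quot L Q) (cls z) (cls a) = cls (u0 \<oplus> a0)"
    unfolding mv_imp_def mv_quot_def by (simp add: u0_def z0_def a0_def)
  also have "\<dots> = cls (neg z \<oplus> a)" using cls_oplus u0 a0 z a by simp
  finally show ?thesis unfolding mv_imp_def .
qed

section \<open>Saturation with respect to Q\<close>

lemma K_saturated:
  assumes G: "upward_closed L G" and QK: "Q \<subseteq> K_set L G"
    and a: "a \<in> carrier"
  shows "cls a \<in> mv_quot_set L Q G \<longleftrightarrow> a \<in> G"
proof
  assume "cls a \<in> mv_quot_set L Q G"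
  then obtain g where g: "g \<in> G" "cls a = cls g" unfolding mv_quot_set_def by auto
  have gC: "g \<in> carrier" using G g unfolding upward_closed_def by blast
  have ga: "g \<leadsto> a \<in> Q" using g cls_self[OF a] unfolding mv_class_def by auto
  show "a \<in> G"
  proof (rule ccontr)
    assume "a \<notin> G"
    then have "(g \<leadsto> a) \<leadsto> a \<notin> G" using QK ga a unfolding K_set_def by blast
    then show False using upward_closedD[OF G g(1) _ le_double_imp] gC a by simp
  qed
next
  assume "a \<in> G"
  then show "cls a \<in> mv_quot_set L Q G" unfolding mv_quot_set_def by blast
qed

lemma F_sub_saturated:
  assumes F: "upward_closed L F" and QK: "Q \<subseteq> K_set L G" and z: "z \<in> carrier"
  shows "z \<in> rel_imp L F G \<longleftrightarrow> (\<forall>a\<in>carrier - G. cls (z \<leadsto> a) \<notin> mv_quot_set L Q F)"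
proof
  assume rel: "z \<in> rel_imp L F G"
  show "\<forall>a\<in>carrier - G. cls (z \<leadsto> a) \<notin> mv_quot_set L Q F"
  proof (intro ballI notI)
    fix a assume a: "a \<in> carrier - G" and "cls (z \<leadsto> a) \<in> mv_quot_set L Q F"
    then obtain f where f: "f \<in> F" "cls (z \<leadsto> a) = cls f" unfolding mv_quot_set_def by auto
    have fC: "f \<in> carrier" using F f unfolding upward_closed_def by blast
    define q where "q = f \<leadsto> (z \<leadsto> a)"
    have "f \<in> cls (z \<leadsto> a)" using f(2) cls_self[OF fC] by simp
    then have q: "q \<in> Q" unfolding q_def mv_class_def by blast
    have qC: "q \<in> carrier" using q Q_subset by blast
    have "q \<in> K_set L G" using q QK by blast
    then have "q \<leadsto> a \<notin> G" using a unfolding K_set_def by simp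
    then have "q \<leadsto> a \<in> carrier - G" using a qC by simp
    then have "z \<in> F_sub L F (q \<leadsto> a)" using rel unfolding rel_imp_def by blast
    then have "z \<leadsto> (q \<leadsto> a) \<notin> F" unfolding F_sub_def by blast
    moreover have "z \<leadsto> (q \<leadsto> a) = (f \<leadsto> (z \<leadsto> a)) \<leadsto> (z \<leadsto> a)"
      using imp_exchange[OF z qC] a q_def by simp
    moreover have "(f \<leadsto> (z \<leadsto> a)) \<leadsto> (z \<leadsto> a) \<in> F"
      using upward_closedD[OF F f(1) _ le_double_imp[OF fC, of "z \<leadsto> a"]] fC z a by simp
    ultimately show False by simp
  qed
next
  assume "\<forall>a\<in>carrier - G. cls (z \<leadsto> a) \<notin> mv_quot_set L Q F"
  then have "z \<leadsto> a \<notin> F" if "a \<in> carrier - G" for a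
    using that unfolding mv_quot_set_def by blast
  then show "z \<in> rel_imp L F G" using z unfolding rel_imp_def F_sub_def by blast
qed

lemma quot_rel_imp_iff:
  assumes F: "upward_closed L F" and G: "upward_closed L G" and QK: "Q \<subseteq> K_set L G"
    and z: "z \<in> carrier"
  shows "cls z \<in> rel_imp (mv_quot L Q) (mv_quot_set L Q F) (mv_quot_set L Q G) \<longleftrightarrow> z \<in> rel_imp L F G"
proof -
  have "cls z \<in> rel_imp (mv_quot L Q) (mv_quot_set L Q F) (mv_quot_set L Q G)
    \<longleftrightarrow> (\<forall>A\<in>cls ` carrier. A \<notin> mv_quot_set L Q G \<longrightarrow>
          mv_imp (mv_quot L Q) (cls z) A \<notin> mv_quot_set L Q F)"
    using z by (auto simp: rel_imp_def F_sub_def quot_carrier)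
  also have "\<dots> \<longleftrightarrow> (\<forall>a\<in>carrier. cls a \<notin> mv_quot_set L Q G \<longrightarrow> cls (z \<leadsto> a) \<notin> mv_quot_set L Q F)"
    using z by (simp add: quot_imp)
  also have "\<dots> \<longleftrightarrow> (\<forall>a\<in>carrier - G. cls (z \<leadsto> a) \<notin> mv_quot_set L Q F)"
    using K_saturated[OF G QK] by blast
  finally show ?thesis using F_sub_saturated[OF F QK z] by simp
qed

end

theorem mainTheorem10:
  fixes L :: "'a mv" and F G Q :: "'a set"
  assumes "mv_algebra L"
    and "lattice_filter L F" and "lattice_filter L G" and "F \<subseteq> G"
    and "implication_filter L Q" and "Q \<subseteq> K_set L G"
  shows "mv_quot_set L Q (rel_imp L F G) =
         rel_imp (mv_quot L Q) (mv_quot_set L Q F) (mv_quot_set L Q G)"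
proof -
  interpret mv_quotient L Q
    using assms by (simp add: mv_alg_def mv_quotient_def mv_quotient_axioms_def)
  have F: "upward_closed L F" and G: "upward_closed L G"
    using assms(2,3) by (simp_all add: lattice_filter_upward_closed)
  let ?R = "rel_imp (mv_quot L Q) (mv_quot_set L Q F) (mv_quot_set L Q G)"
  have "?R = cls ` {z \<in> carrier. cls z \<in> ?R}"
    using quot_carrier unfolding rel_imp_def by auto
  also have "{z \<in> carrier. cls z \<in> ?R} = rel_imp L F G"
    using quot_rel_imp_iff[OF F G assms(6)] unfolding rel_imp_def by blast
  finally show ?thesis unfolding mv_quot_set_def by simp
qed

end
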